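(* Let $f$ be a $2\pi$-periodic continuous function with modulus of continuity $\omega(t)$, and let $A=(a_{n,k})$ be a lower triangular infinite matrix of real numbers ($a_{n,k}=0$ for $k>n$) with $a_{n,k}\ge 0$ and $\sum_{k=0}^n a_{n,k}=1$ for all $n$. Let $\beta\ge0$ and suppose \[ \sum_{k=0}^{m-1}(k+1)^{\beta}\left|\frac{a_{n,k}}{(k+1)^{\beta}}-\frac{a_{n,k+1}}{(k+2)^{\beta}}\right|=\mathcal{O}(a_{n,m}) \] for all $m=0,1,\dots,n$ and $n=0,1,\dots$. Suppose there is a function $H(u)\ge0$ such that $\int_u^{\pi} t^{-2}\omega(t)\,dt=\mathcal{O}(H(u))$ as $u\to+0$. Then \[ \|T_{n,A}(f)-f\|=\mathcal{O}\left(\omega\left(\frac{\pi}{n+1}\right)+a_{n,n}H\left(\frac{\pi}{n+1}\right)\right). \] If, in addition, $\int_0^{t}H(u)\,du=\mathcal{O}(tH(t))$ as $t\to+0$, then \[ \|T_{n,A}(f)-f\|=\mathcal{O}\left(a_{n,n}H\left(\frac{\pi}{n+1}\right)\right). \]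
   Context: $S_k(f;x)$ is the $k$-th partial sum of the Fourier series of $f$ at $x$, and $T_{n,A}(f;x):=\sum_{k=0}^n a_{n,k}S_k(f;x)$. $\|\cdot\|$ is the sup-norm. $\omega(\delta)=\sup_{|h|\le\delta}\sup_x|f(x+h)-f(x)|$. The notation $u=\mathcal{O}(v)$ means $u\le Cv$ for a positive constant $C$ (independent of $n$). *)

theory Defs
  imports "HOL-Analysis.Analysis"
begin

definition fourier_a :: "(real \<Rightarrow> real) \<Rightarrow> nat \<Rightarrow> real" where
  "fourier_a f j = (1 / pi) * integral {-pi..pi} (\<lambda>t. f t * cos (real j * t))"

definition fourier_b :: "(real \<Rightarrow> real) \<Rightarrow> nat \<Rightarrow> real" where
  "fourier_b f j = (1 / pi) * integral {-pi..pi} (\<lambda>t. f t * sin (real j * t))"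

definition fourier_partial_sum :: "(real \<Rightarrow> real) \<Rightarrow> nat \<Rightarrow> real \<Rightarrow> real" where
  "fourier_partial_sum f k x = fourier_a f 0 / 2 +
     (\<Sum>j=1..k. fourier_a f j * cos (real j * x) + fourier_b f j * sin (real j * x))"

definition matrix_mean :: "(nat \<Rightarrow> nat \<Rightarrow> real) \<Rightarrow> (real \<Rightarrow> real) \<Rightarrow> nat \<Rightarrow> real \<Rightarrow> real" where
  "matrix_mean A f n x = (\<Sum>k=0..n. A n k * fourier_partial_sum f k x)"

definition sup_norm :: "(real \<Rightarrow> real) \<Rightarrow> real" where
  "sup_norm g = (SUP x. \<bar>g x\<bar>)"

definition modulus_of_continuity :: "(real \<Rightarrow> real) \<Rightarrow> real \<Rightarrow> real" where
  "modulus_of_continuity f \<delta> = (SUP p \<in> {p :: real \<times> real. \<bar>snd p\<bar> \<le> \<delta>}. \<bar>f (fst p + snd p) - f (fst p)\<bar>)"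

end

(* For 0 <= s <= pi write phi_x(s) = f(x + s) + f(x - s) - 2 f(x). Then
   T_{n,A}(f;x) - f(x) = (1/pi) * integral_0^pi phi_x(s) K_n(s) ds with the kernel
   K_n = sum_k a_{n,k} D_k built from the Dirichlet kernels D_k. Split the integral at
   u = pi/(n+1). Near 0, |K_n| <= n + 1 and |phi_x| <= 2 omega(u) give O(omega(u)). Away from 0,
   2 sin(s/2) D_k(s) = sin((k + 1/2) s), and two Abel summations (first against the weights
   (k+1)^beta, then against a_{n,k}/(k+1)^beta) turn the hypothesis on A into
   |K_n(s)| <= const * a_{n,n} / s^2, which gives a_{n,n} * integral_u^pi omega(t)/t^2 dt.
   The same hypothesis forces a_{n,k} <= (1 + C) a_{n,n} for k <= n, hence
   a_{n,n} >= 1/((1 + C)(n + 1)); since omega(u) <= 2u integral_u^pi omega(t)/t^2 dt, the term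
   omega(u) is then absorbed by the integral term. *)

theory Submission
  imports Defs "HOL-Library.Periodic_Fun" "HOL-Real_Asymp.Real_Asymp"
begin

section \<open>Periodic functions\<close>

lemma continuous_on_compose_UNIV:
  "continuous_on UNIV f \<Longrightarrow> continuous_on S g \<Longrightarrow> continuous_on S (\<lambda>s. f (g s))"
  using continuous_on_compose2[of UNIV f S g] by simp

lemma continuous_on_UNIV_integrable:
  fixes g :: "real \<Rightarrow> 'a::banach"
  shows "continuous_on UNIV g \<Longrightarrow> g integrable_on {a..b}"
  by (rule integrable_continuous_interval[OF continuous_on_subset]) auto

lemma decompose_mod_period:
  fixes x p :: real
  assumes "0 < p"
  obtains r m where "0 \<le> r" "r < p" "x = r + of_int m * p"
proof (rule that[where m = "\<lfloor>x / p\<rfloor>"])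
  show "0 \<le> x - of_int \<lfloor>x / p\<rfloor> * p" "x - of_int \<lfloor>x / p\<rfloor> * p < p"
    using assms floor_divide_lower[of p x] floor_divide_upper[of p x] by (auto simp: algebra_simps)
qed simp

lemma continuous_periodic_bounded:
  fixes g :: "real \<Rightarrow> real"
  assumes cont: "continuous_on UNIV g" and per: "\<And>x. g (x + p) = g x" and "0 < p"
  shows "bounded (range g)"
proof -
  interpret periodic_fun_simple g p using per by unfold_locales
  have "range g = g ` {0..p}"
  proof (intro equalityI subsetI)
    fix y assume "y \<in> range g"
    then obtain x where x: "y = g x" by blast
    obtain r m where "0 \<le> r" "r < p" "x = r + of_int m * p"
      using decompose_mod_period[OF \<open>0 < p\<close>] .
    then show "y \<in> g ` {0..p}" using x plus_of_int[of r m] by force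
  qed auto
  moreover have "compact (g ` {0..p})"
    by (intro compact_continuous_image continuous_on_subset[OF cont]) auto
  ultimately show ?thesis by (simp add: compact_imp_bounded)
qed

lemma integral_period_interval:
  fixes g :: "real \<Rightarrow> real"
  assumes cont: "continuous_on UNIV g" and per: "\<And>x. g (x + p) = g x" and "0 < p"
  shows "integral {a..a + p} g = integral {0..p} g"
proof -
  interpret periodic_fun_simple g p using per by unfold_locales
  obtain r m where r: "0 \<le> r" "r < p" and a: "a = r + of_int m * p"
    using decompose_mod_period[OF \<open>0 < p\<close>] .
  have "integral {a..a + p} g = integral {r..r + p} (g \<circ> (+) (of_int m * p))"
    using integral_shift_Icc_real[of r "r + p" g "of_int m * p"] by (simp add: a ac_simps)
  also have "g \<circ> (+) (of_int m * p) = g"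
    using plus_of_int by (simp add: fun_eq_iff add.commute)
  also have "integral {r..r + p} g = integral {r..p} g + integral {p..r + p} g"
    using r continuous_on_UNIV_integrable[OF cont]
    by (intro Henstock_Kurzweil_Integration.integral_combine[symmetric]) auto
  also have "integral {p..r + p} g = integral {0..r} (g \<circ> (+) p)"
    using integral_shift_Icc_real[of 0 r g p] by (simp add: add.commute)
  also have "g \<circ> (+) p = g"
    using per by (simp add: fun_eq_iff add.commute)
  also have "integral {r..p} g + integral {0..r} g = integral {0..p} g"
    using r continuous_on_UNIV_integrable[OF cont]
    by (subst add.commute, intro Henstock_Kurzweil_Integration.integral_combine) auto
  finally show ?thesis .
qed

lemma integral_periodic_recentre:
  fixes g :: "real \<Rightarrow> real"
  assumes cont: "continuous_on UNIV g" and per: "\<And>x. g (x + 2 * pi) = g x"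
  shows "integral {-pi..pi} (\<lambda>s. g (c + s)) = integral {-pi..pi} g"
proof -
  have "integral {-pi..pi} (\<lambda>s. g (c + s)) = integral {(c - pi)..(c - pi) + 2 * pi} g"
    using integral_shift_Icc_real[of "-pi" pi g c] by (simp add: o_def algebra_simps)
  also have "\<dots> = integral {-pi..-pi + 2 * pi} g"
    using integral_period_interval[OF cont per, of "c - pi"]
      integral_period_interval[OF cont per, of "-pi"]
    by simp
  finally show ?thesis by simp
qed

lemma integral_symmetric_interval:
  fixes g :: "real \<Rightarrow> real"
  assumes "continuous_on UNIV g" and "0 \<le> a"
  shows "integral {-a..a} g = integral {0..a} (\<lambda>s. g s + g (- s))"
proof -
  have "integral {-a..a} g = integral {-a..0} g + integral {0..a} g"
    using assms continuous_on_UNIV_integrable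
    by (intro Henstock_Kurzweil_Integration.integral_combine[symmetric]) auto
  also have "integral {-a..0} g = integral {0..a} (\<lambda>s. g (- s))"
    using Henstock_Kurzweil_Integration.integral_reflect_real[of a 0 "\<lambda>s. g (- s)"] by simp
  also have "\<dots> + integral {0..a} g = integral {0..a} (\<lambda>s. g s + g (- s))"
    by (subst integral_add)
      (intro continuous_on_UNIV_integrable continuous_on_compose_UNIV[OF assms(1)] continuous_intros
        | simp)+
  finally show ?thesis .
qed

section \<open>Modulus of continuity\<close>

lemma abs_diff_le_modulus_of_continuity:
  fixes f :: "real \<Rightarrow> real"
  assumes "bounded (range f)" and h: "\<bar>h\<bar> \<le> \<delta>"
  shows "\<bar>f (x + h) - f x\<bar> \<le> modulus_of_continuity f \<delta>"
proof -
  obtain B where bounded: "\<And>x. \<bar>f x\<bar> \<le> B"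
    using \<open>bounded (range f)\<close> by (auto simp: bounded_real)
  have "bdd_above ((\<lambda>p. \<bar>f (fst p + snd p) - f (fst p)\<bar>) ` {p. \<bar>snd p\<bar> \<le> \<delta>})"
  proof (rule bdd_aboveI2)
    fix p :: "real \<times> real"
    show "\<bar>f (fst p + snd p) - f (fst p)\<bar> \<le> 2 * B"
      using bounded[of "fst p + snd p"] bounded[of "fst p"] by linarith
  qed
  then have "\<bar>f (fst (x, h) + snd (x, h)) - f (fst (x, h))\<bar> \<le> modulus_of_continuity f \<delta>"
    unfolding modulus_of_continuity_def by (rule cSUP_upper[rotated]) (use h in auto)
  then show ?thesis by simp
qed

lemma modulus_of_continuity_nonneg:
  fixes f :: "real \<Rightarrow> real"
  assumes "bounded (range f)" and "0 \<le> \<delta>"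
  shows "0 \<le> modulus_of_continuity f \<delta>"
  using abs_diff_le_modulus_of_continuity[of f 0 \<delta> 0] assms by simp

lemma modulus_of_continuity_le:
  fixes f :: "real \<Rightarrow> real"
  assumes "0 \<le> \<delta>" and "\<And>x h. \<bar>h\<bar> \<le> \<delta> \<Longrightarrow> \<bar>f (x + h) - f x\<bar> \<le> M"
  shows "modulus_of_continuity f \<delta> \<le> M"
  unfolding modulus_of_continuity_def using assms by (intro cSUP_least) (auto intro!: exI[of _ 0])

lemma modulus_of_continuity_mono:
  fixes f :: "real \<Rightarrow> real"
  assumes bounded: "bounded (range f)" and "0 \<le> \<delta>" "\<delta> \<le> \<delta>'"
  shows "modulus_of_continuity f \<delta> \<le> modulus_of_continuity f \<delta>'"
  using assms by (intro modulus_of_continuity_le abs_diff_le_modulus_of_continuity[OF bounded]) auto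

lemma modulus_of_continuity_mult_le:
  fixes f :: "real \<Rightarrow> real"
  assumes bounded: "bounded (range f)" and "0 \<le> \<delta>"
  shows "modulus_of_continuity f (real m * \<delta>) \<le> real m * modulus_of_continuity f \<delta>"
proof (rule modulus_of_continuity_le)
  show "0 \<le> real m * \<delta>" using \<open>0 \<le> \<delta>\<close> by simp
  fix x h :: real
  assume h: "\<bar>h\<bar> \<le> real m * \<delta>"
  show "\<bar>f (x + h) - f x\<bar> \<le> real m * modulus_of_continuity f \<delta>"
  proof (cases "m = 0")
    case True
    then show ?thesis using h by simp
  next
    case False
    define e where "e = h / real m"
    have e: "\<bar>e\<bar> \<le> \<delta>" using h False by (simp add: e_def field_simps)
    have "f (x + h) - f x = (\<Sum>i<m. f (x + real (Suc i) * e) - f (x + real i * e))"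
      using False by (subst sum_lessThan_telescope) (simp add: e_def)
    also have "\<bar>\<dots>\<bar> \<le> (\<Sum>i<m. \<bar>f (x + real (Suc i) * e) - f (x + real i * e)\<bar>)"
      by (rule sum_abs)
    also have "\<dots> \<le> (\<Sum>i<m. modulus_of_continuity f \<delta>)"
    proof (rule sum_mono)
      fix i
      have "x + real (Suc i) * e = (x + real i * e) + e" by (simp add: algebra_simps)
      then show "\<bar>f (x + real (Suc i) * e) - f (x + real i * e)\<bar> \<le> modulus_of_continuity f \<delta>"
        using abs_diff_le_modulus_of_continuity[OF bounded e, of "x + real i * e"]
        by (simp add: add.assoc)
    qed
    finally show ?thesis by simp
  qed
qed

lemma modulus_over_square_integrable:
  fixes f :: "real \<Rightarrow> real"
  assumes bounded: "bounded (range f)" and "0 < u"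
  shows "(\<lambda>t. modulus_of_continuity f t / t\<^sup>2) integrable_on {u..b}"
proof -
  have "mono_on {u..b} (modulus_of_continuity f)"
    using \<open>0 < u\<close> by (intro mono_onI modulus_of_continuity_mono[OF bounded]) auto
  then have "modulus_of_continuity f absolutely_integrable_on {u..b}"
    using \<open>0 < u\<close> modulus_of_continuity_nonneg[OF bounded]
    by (intro nonnegative_absolutely_integrable_1 integrable_on_mono_on) auto
  moreover have cont: "continuous_on {u..b} (\<lambda>t::real. 1 / t\<^sup>2)"
    using \<open>0 < u\<close> by (intro continuous_intros) auto
  ultimately have "(\<lambda>t. 1 / t\<^sup>2 * modulus_of_continuity f t) absolutely_integrable_on {u..b}"
    by (intro absolutely_integrable_bounded_measurable_product_real
        continuous_imp_measurable_on_sets_lebesgue compact_imp_bounded compact_continuous_image)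
      auto
  then show ?thesis
    by (simp add: absolutely_integrable_on_def)
qed

lemma integral_modulus_over_square_nonneg:
  fixes f :: "real \<Rightarrow> real"
  assumes bounded: "bounded (range f)" and "0 < u"
  shows "0 \<le> integral {u..b} (\<lambda>t. modulus_of_continuity f t / t\<^sup>2)"
  using modulus_of_continuity_nonneg[OF bounded] \<open>0 < u\<close>
  by (intro integral_nonneg[OF modulus_over_square_integrable[OF assms]]) auto

lemma integral_modulus_over_square_le:
  fixes f :: "real \<Rightarrow> real" and n :: nat
  assumes bounded: "bounded (range f)"
  defines "u \<equiv> pi / (real n + 1)"
  shows "integral {u..pi} (\<lambda>t. modulus_of_continuity f t / t\<^sup>2)
           \<le> (real n + 1) ^ 3 * modulus_of_continuity f u"
proof -
  let ?\<omega> = "modulus_of_continuity f"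
  have u: "0 < u" "u \<le> pi"
    by (simp_all add: u_def field_simps)
  have \<omega>_nonneg: "0 \<le> ?\<omega> t" if "0 \<le> t" for t
    using modulus_of_continuity_nonneg[OF bounded that] .
  have "integral {u..pi} (\<lambda>t. ?\<omega> t / t\<^sup>2) \<le> integral {u..pi} (\<lambda>t. ?\<omega> pi / u\<^sup>2)"
  proof (rule integral_le[OF modulus_over_square_integrable[OF bounded \<open>0 < u\<close>]])
    fix t assume t: "t \<in> {u..pi}"
    then have "?\<omega> t \<le> ?\<omega> pi" and "0 \<le> ?\<omega> t"
      using u modulus_of_continuity_mono[OF bounded, of t pi] \<omega>_nonneg[of t] by auto
    moreover have "1 / t\<^sup>2 \<le> 1 / u\<^sup>2"
      using t u by (intro divide_left_mono power_mono) auto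
    ultimately show "?\<omega> t / t\<^sup>2 \<le> ?\<omega> pi / u\<^sup>2"
      using mult_mono[of "?\<omega> t" "?\<omega> pi" "1 / t\<^sup>2" "1 / u\<^sup>2"] \<omega>_nonneg[of pi] by simp
  qed (rule integrable_const_ivl)
  also have "\<dots> \<le> pi * (?\<omega> pi / u\<^sup>2)"
    using u \<omega>_nonneg[of pi] by (simp, intro divide_right_mono mult_right_mono) auto
  also have "\<dots> \<le> pi * ((real n + 1) * ?\<omega> u / u\<^sup>2)"
    using modulus_of_continuity_mult_le[OF bounded, of u "Suc n"] u
    by (intro mult_left_mono divide_right_mono) (simp_all add: u_def add.commute)
  also have "\<dots> = (real n + 1) ^ 3 * ?\<omega> u / pi"
    by (simp add: u_def power2_eq_square power3_eq_cube field_simps)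
  also have "\<dots> \<le> (real n + 1) ^ 3 * ?\<omega> u"
  proof -
    have "0 \<le> (real n + 1) ^ 3 * ?\<omega> u" using u \<omega>_nonneg[of u] by simp
    then show ?thesis using pi_ge_two by (simp add: divide_le_eq mult_le_cancel_left1)
  qed
  finally show ?thesis .
qed

lemma modulus_le_integral_modulus_over_square:
  fixes f :: "real \<Rightarrow> real"
  assumes bounded: "bounded (range f)" and u: "0 < u" "u \<le> pi / 2"
  shows "modulus_of_continuity f u \<le> 2 * u * integral {u..pi} (\<lambda>t. modulus_of_continuity f t / t\<^sup>2)"
proof -
  let ?\<omega> = "modulus_of_continuity f"
  have "((\<lambda>t. 1 / t\<^sup>2) has_integral (1 / u - 1 / pi)) {u..pi}"
  proof -
    have "((\<lambda>t. 1 / t\<^sup>2) has_integral ((- 1 / pi) - (- 1 / u))) {u..pi}"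
    proof (rule fundamental_theorem_of_calculus)
      fix t assume "t \<in> {u..pi}"
      then have "t \<noteq> 0" using u by auto
      then show "((\<lambda>t. - 1 / t) has_vector_derivative 1 / t\<^sup>2) (at t within {u..pi})"
        by (auto intro!: derivative_eq_intros
            simp: has_real_derivative_iff_has_vector_derivative[symmetric] power2_eq_square)
    qed (use u in auto)
    then show ?thesis by simp
  qed
  then have "((\<lambda>t. ?\<omega> u * (1 / t\<^sup>2)) has_integral (?\<omega> u * (1 / u - 1 / pi))) {u..pi}"
    by (rule has_integral_mult_right)
  then have "?\<omega> u * (1 / u - 1 / pi) \<le> integral {u..pi} (\<lambda>t. ?\<omega> t / t\<^sup>2)"
  proof (rule has_integral_le)
    show "((\<lambda>t. ?\<omega> t / t\<^sup>2) has_integral integral {u..pi} (\<lambda>t. ?\<omega> t / t\<^sup>2)) {u..pi}"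
      using modulus_over_square_integrable[OF bounded u(1)] by (rule integrable_integral)
  next
    fix t assume "t \<in> {u..pi}"
    then have "?\<omega> u \<le> ?\<omega> t" using u by (intro modulus_of_continuity_mono[OF bounded]) auto
    then show "?\<omega> u * (1 / t\<^sup>2) \<le> ?\<omega> t / t\<^sup>2" by (simp add: divide_right_mono)
  qed
  moreover have "1 / (2 * u) \<le> 1 / u - 1 / pi"
    using u by (simp add: field_simps)
  ultimately have "?\<omega> u * (1 / (2 * u)) \<le> integral {u..pi} (\<lambda>t. ?\<omega> t / t\<^sup>2)"
    using modulus_of_continuity_nonneg[OF bounded, of u] u
    by (meson less_imp_le mult_left_mono order_trans)
  then show ?thesis using u by (simp add: field_simps)
qed

lemma abs_symmetric_difference_le:
  fixes f :: "real \<Rightarrow> real"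
  assumes bounded: "bounded (range f)" and "\<bar>s\<bar> \<le> \<delta>"
  shows "\<bar>f (x + s) + f (x - s) - 2 * f x\<bar> \<le> 2 * modulus_of_continuity f \<delta>"
  using abs_diff_le_modulus_of_continuity[OF bounded, of s \<delta> x]
    abs_diff_le_modulus_of_continuity[OF bounded, of "- s" \<delta> x] \<open>\<bar>s\<bar> \<le> \<delta>\<close>
  by simp

section \<open>Dirichlet kernel and Fourier partial sums\<close>

definition dirichlet_kernel :: "nat \<Rightarrow> real \<Rightarrow> real" where
  "dirichlet_kernel k s = 1 / 2 + (\<Sum>j=1..k. cos (real j * s))"

lemma dirichlet_kernel_periodic: "dirichlet_kernel k (s + 2 * pi) = dirichlet_kernel k s"
  using cos.plus_of_nat[of "real _ * s"]
  by (simp add: dirichlet_kernel_def distrib_left mult.commute)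

lemma dirichlet_kernel_minus: "dirichlet_kernel k (- s) = dirichlet_kernel k s"
  by (simp add: dirichlet_kernel_def)

lemma continuous_on_dirichlet_kernel [continuous_intros]:
  fixes g :: "real \<Rightarrow> real"
  assumes "continuous_on S g"
  shows "continuous_on S (\<lambda>s. dirichlet_kernel k (g s))"
  unfolding dirichlet_kernel_def by (intro continuous_intros assms)

lemma integral_dirichlet_kernel: "integral {0..pi} (dirichlet_kernel k) = pi / 2"
proof -
  have cos_integral: "integral {0..pi} (\<lambda>s. cos (real j * s)) = 0" if "1 \<le> j" for j
  proof -
    have "((\<lambda>s. cos (real j * s))
        has_integral (sin (real j * pi) / real j - sin (real j * 0) / real j)) {0..pi}"
    proof (rule fundamental_theorem_of_calculus)
      fix s assume "s \<in> {0..pi}"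
      show "((\<lambda>s. sin (real j * s) / real j) has_vector_derivative cos (real j * s))
          (at s within {0..pi})"
        using that by (auto intro!: derivative_eq_intros
            simp: has_real_derivative_iff_has_vector_derivative[symmetric])
    qed simp
    then show ?thesis by (simp add: integral_unique)
  qed
  have "integral {0..pi} (dirichlet_kernel k)
      = integral {0..pi} (\<lambda>s. 1 / 2) + integral {0..pi} (\<lambda>s. \<Sum>j=1..k. cos (real j * s))"
    unfolding dirichlet_kernel_def
    by (intro integral_add integrable_continuous_interval continuous_intros)
  also have "integral {0..pi} (\<lambda>s. \<Sum>j=1..k. cos (real j * s))
      = (\<Sum>j=1..k. integral {0..pi} (\<lambda>s. cos (real j * s)))"
    by (intro integral_sum finite_atLeastAtMost integrable_continuous_interval continuous_intros)
  finally show ?thesis by (simp add: cos_integral)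
qed

lemma fourier_partial_sum_eq_integral:
  fixes f :: "real \<Rightarrow> real"
  assumes cont: "continuous_on UNIV f"
  shows "fourier_partial_sum f k x
    = 1 / pi * integral {-pi..pi} (\<lambda>t. f t * dirichlet_kernel k (t - x))"
proof -
  let ?c = "\<lambda>j t. f t * cos (real j * t)" and ?s = "\<lambda>j t. f t * sin (real j * t)"
  have expand: "(\<lambda>t. f t * dirichlet_kernel k (t - x))
      = (\<lambda>t. f t / 2 + (\<Sum>j=1..k. cos (real j * x) * ?c j t + sin (real j * x) * ?s j t))"
    by (simp add: fun_eq_iff dirichlet_kernel_def sum_distrib_left cos_diff algebra_simps)
  have "integral {-pi..pi} (\<lambda>t. f t * dirichlet_kernel k (t - x))
      = integral {-pi..pi} (\<lambda>t. f t / 2)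
        + integral {-pi..pi} (\<lambda>t. \<Sum>j=1..k. cos (real j * x) * ?c j t + sin (real j * x) * ?s j t)"
    unfolding expand
    by (intro integral_add continuous_on_UNIV_integrable continuous_intros cont) auto
  also have "integral {-pi..pi} (\<lambda>t. \<Sum>j=1..k. cos (real j * x) * ?c j t + sin (real j * x) * ?s j t)
      = (\<Sum>j=1..k. integral {-pi..pi} (\<lambda>t. cos (real j * x) * ?c j t + sin (real j * x) * ?s j t))"
    by (intro integral_sum finite_atLeastAtMost continuous_on_UNIV_integrable
        continuous_intros cont)
  also have "\<dots> = (\<Sum>j=1..k. cos (real j * x) * integral {-pi..pi} (?c j)
      + sin (real j * x) * integral {-pi..pi} (?s j))"
    by (intro sum.cong refl, subst integral_add)
      (intro continuous_on_UNIV_integrable continuous_intros cont | simp)+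
  finally have "integral {-pi..pi} (\<lambda>t. f t * dirichlet_kernel k (t - x))
      = integral {-pi..pi} f / 2 + (\<Sum>j=1..k. cos (real j * x) * integral {-pi..pi} (?c j)
          + sin (real j * x) * integral {-pi..pi} (?s j))"
    by simp
  then show ?thesis
    by (simp add: fourier_partial_sum_def fourier_a_def fourier_b_def sum_distrib_left
        sum_divide_distrib algebra_simps)
qed

lemma fourier_partial_sum_minus_eq:
  fixes f :: "real \<Rightarrow> real"
  assumes cont: "continuous_on UNIV f" and per: "\<And>x. f (x + 2 * pi) = f x"
  shows "fourier_partial_sum f k x - f x
    = 1 / pi * integral {0..pi} (\<lambda>s. (f (x + s) + f (x - s) - 2 * f x) * dirichlet_kernel k s)"
proof -
  have "continuous_on UNIV (\<lambda>t. f t * dirichlet_kernel k (t - x))"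
    by (intro continuous_intros cont)
  moreover have "f (t + 2 * pi) * dirichlet_kernel k (t + 2 * pi - x)
      = f t * dirichlet_kernel k (t - x)" for t
    using per[of t] dirichlet_kernel_periodic[of k "t - x"] by (simp add: diff_add_eq[symmetric])
  ultimately have "integral {-pi..pi} (\<lambda>t. f t * dirichlet_kernel k (t - x))
      = integral {-pi..pi} (\<lambda>s. f (x + s) * dirichlet_kernel k s)"
    using integral_periodic_recentre[of "\<lambda>t. f t * dirichlet_kernel k (t - x)" x] by simp
  also have "\<dots> = integral {0..pi} (\<lambda>s. (f (x + s) + f (x - s)) * dirichlet_kernel k s)"
    by (subst integral_symmetric_interval)
      (intro continuous_intros continuous_on_compose_UNIV[OF cont]
        | simp add: dirichlet_kernel_minus algebra_simps)+
  also have "\<dots> = integral {0..pi} (\<lambda>s. (f (x + s) + f (x - s) - 2 * f x) * dirichlet_kernel k s)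
      + integral {0..pi} (\<lambda>s. 2 * f x * dirichlet_kernel k s)"
    by (subst integral_add[symmetric])
      (intro continuous_on_UNIV_integrable continuous_intros continuous_on_compose_UNIV[OF cont]
        | simp add: algebra_simps)+
  also have "integral {0..pi} (\<lambda>s. 2 * f x * dirichlet_kernel k s) = pi * f x"
    by (simp add: integral_dirichlet_kernel)
  finally show ?thesis
    by (simp add: fourier_partial_sum_eq_integral[OF cont] field_simps)
qed

definition mean_kernel :: "(nat \<Rightarrow> real) \<Rightarrow> nat \<Rightarrow> real \<Rightarrow> real" where
  "mean_kernel a n s = (\<Sum>k=0..n. a k * dirichlet_kernel k s)"

lemma continuous_on_mean_kernel [continuous_intros]:
  fixes g :: "real \<Rightarrow> real"
  assumes "continuous_on S g"
  shows "continuous_on S (\<lambda>s. mean_kernel a n (g s))"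
  unfolding mean_kernel_def by (intro continuous_intros assms)

lemma matrix_mean_minus_eq:
  fixes f :: "real \<Rightarrow> real"
  assumes cont: "continuous_on UNIV f" and per: "\<And>x. f (x + 2 * pi) = f x"
    and rowsum: "(\<Sum>k=0..n. A n k) = 1"
  shows "matrix_mean A f n x - f x
    = 1 / pi * integral {0..pi} (\<lambda>s. (f (x + s) + f (x - s) - 2 * f x) * mean_kernel (A n) n s)"
proof -
  define \<phi> where "\<phi> s = f (x + s) + f (x - s) - 2 * f x" for s
  have "continuous_on UNIV \<phi>"
    unfolding \<phi>_def by (intro continuous_intros continuous_on_compose_UNIV[OF cont])
  then have "continuous_on UNIV (\<lambda>s. A n k * (\<phi> s * dirichlet_kernel k s))" for k
    by (intro continuous_intros)
  then have int: "(\<lambda>s. A n k * (\<phi> s * dirichlet_kernel k s)) integrable_on {0..pi}" for k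
    by (rule continuous_on_UNIV_integrable)
  have "matrix_mean A f n x - f x = (\<Sum>k=0..n. A n k * (fourier_partial_sum f k x - f x))"
    using rowsum
    by (simp add: matrix_mean_def right_diff_distrib sum_subtractf flip: sum_distrib_right)
  also have "\<dots> = 1 / pi * (\<Sum>k=0..n. integral {0..pi} (\<lambda>s. A n k * (\<phi> s * dirichlet_kernel k s)))"
  proof -
    have "A n k * (fourier_partial_sum f k x - f x)
        = 1 / pi * integral {0..pi} (\<lambda>s. A n k * (\<phi> s * dirichlet_kernel k s))" for k
      using fourier_partial_sum_minus_eq[of f k x] cont per by (simp add: \<phi>_def)
    then show ?thesis by (simp add: sum_distrib_left)
  qed
  also have "(\<Sum>k=0..n. integral {0..pi} (\<lambda>s. A n k * (\<phi> s * dirichlet_kernel k s)))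
      = integral {0..pi} (\<lambda>s. \<phi> s * mean_kernel (A n) n s)"
    unfolding integral_sum[OF finite_atLeastAtMost int, symmetric] mean_kernel_def sum_distrib_left
    by (simp add: mult.left_commute)
  finally show ?thesis by (simp add: \<phi>_def)
qed

lemma abs_dirichlet_kernel_le: "\<bar>dirichlet_kernel k s\<bar> \<le> real k + 1"
proof -
  have "\<bar>dirichlet_kernel k s\<bar> \<le> 1 / 2 + (\<Sum>j=1..k. \<bar>cos (real j * s)\<bar>)"
    unfolding dirichlet_kernel_def by (rule order_trans[OF abs_triangle_ineq]) simp
  also have "\<dots> \<le> 1 / 2 + (\<Sum>j=1..k. 1)"
    by (intro add_left_mono sum_mono) simp
  finally show ?thesis by simp
qed

lemma abs_mean_kernel_le:
  fixes a :: "nat \<Rightarrow> real"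
  assumes nonneg: "\<And>k. 0 \<le> a k" and rowsum: "(\<Sum>k=0..n. a k) = 1"
  shows "\<bar>mean_kernel a n s\<bar> \<le> real n + 1"
proof -
  have "\<bar>mean_kernel a n s\<bar> \<le> (\<Sum>k=0..n. a k * \<bar>dirichlet_kernel k s\<bar>)"
    unfolding mean_kernel_def using nonneg by (auto intro: order_trans[OF sum_abs] simp: abs_mult)
  also have "\<dots> \<le> (\<Sum>k=0..n. a k * (real n + 1))"
    using nonneg
    by (intro sum_mono mult_left_mono) (auto intro: order_trans[OF abs_dirichlet_kernel_le])
  also have "\<dots> = real n + 1"
    using rowsum by (simp flip: sum_distrib_right)
  finally show ?thesis .
qed

section \<open>Summation by parts and the kernel estimate\<close>

lemma sum_by_parts:
  fixes b c :: "nat \<Rightarrow> 'a::comm_ring"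
  shows "(\<Sum>k\<le>n. b k * c k) = (\<Sum>k<n. (b k - b (Suc k)) * (\<Sum>i\<le>k. c i)) + b n * (\<Sum>i\<le>n. c i)"
  by (induction n) (simp_all add: algebra_simps)

lemma abs_sum_by_parts_le:
  fixes b c :: "nat \<Rightarrow> real"
  shows "\<bar>\<Sum>k\<le>n. b k * c k\<bar>
    \<le> (\<Sum>k<n. \<bar>b k - b (Suc k)\<bar> * \<bar>\<Sum>i\<le>k. c i\<bar>) + \<bar>b n\<bar> * \<bar>\<Sum>i\<le>n. c i\<bar>"
  unfolding sum_by_parts abs_mult[symmetric]
  by (rule order_trans[OF abs_triangle_ineq add_right_mono[OF sum_abs]])

lemma abs_sum_monotone_weights_le:
  fixes w \<sigma> :: "nat \<Rightarrow> real"
  assumes w_nonneg: "\<And>i. 0 \<le> w i" and w_mono: "\<And>i. w i \<le> w (Suc i)"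
    and partial_sums: "\<And>j. \<bar>\<Sum>i\<le>j. \<sigma> i\<bar> \<le> M"
  shows "\<bar>\<Sum>i\<le>k. w i * \<sigma> i\<bar> \<le> 2 * w k * M"
proof -
  have "\<bar>\<Sum>i\<le>k. w i * \<sigma> i\<bar> \<le> (\<Sum>i<k. \<bar>w i - w (Suc i)\<bar> * \<bar>\<Sum>j\<le>i. \<sigma> j\<bar>) + \<bar>w k\<bar> * \<bar>\<Sum>j\<le>k. \<sigma> j\<bar>"
    by (rule abs_sum_by_parts_le)
  also have "\<dots> \<le> (\<Sum>i<k. (w (Suc i) - w i) * M) + w k * M"
    using w_mono w_nonneg partial_sums
    by (intro add_mono sum_mono mult_mono) auto
  also have "(\<Sum>i<k. (w (Suc i) - w i) * M) = (w k - w 0) * M"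
    by (simp add: sum_lessThan_telescope flip: sum_distrib_right)
  also have "(w k - w 0) * M + w k * M \<le> 2 * w k * M"
    using w_nonneg[of 0] partial_sums[of 0] by (simp add: algebra_simps mult_left_mono)
  finally show ?thesis .
qed

lemma sin_half_times_dirichlet_kernel:
  "2 * sin (s / 2) * dirichlet_kernel k s = sin ((real k + 1 / 2) * s)"
proof (induction k)
  case (Suc k)
  have "2 * sin (s / 2) * cos ((real k + 1) * s)
      = sin ((real k + 1) * s + s / 2) - sin ((real k + 1) * s - s / 2)"
    by (simp add: sin_add sin_diff)
  moreover have "(real k + 1) * s + s / 2 = (real (Suc k) + 1 / 2) * s"
    and "(real k + 1) * s - s / 2 = (real k + 1 / 2) * s"
    by (simp_all add: algebra_simps)
  ultimately show ?case
    using Suc by (simp add: dirichlet_kernel_def algebra_simps)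
qed (simp add: dirichlet_kernel_def)

lemma sin_half_times_sum_sin:
  "2 * sin (s / 2) * (\<Sum>i\<le>j. sin ((real i + 1 / 2) * s)) = 1 - cos ((real j + 1) * s)"
proof -
  have step: "2 * sin (s / 2) * sin ((real i + 1 / 2) * s)
      = cos (real i * s) - cos ((real i + 1) * s)" for i
  proof -
    have "real i * s = (real i + 1 / 2) * s - s / 2"
      and "(real i + 1) * s = (real i + 1 / 2) * s + s / 2"
      by (simp_all add: algebra_simps)
    then show ?thesis by (simp add: cos_add cos_diff)
  qed
  show ?thesis
  proof (induction j)
    case 0
    then show ?case using step[of 0] by simp
  next
    case (Suc j)
    then show ?case using step[of "Suc j"] by (simp add: algebra_simps)
  qed
qed

lemma abs_sum_sin_le:
  assumes "0 < sin (s / 2)"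
  shows "\<bar>\<Sum>i\<le>j. sin ((real i + 1 / 2) * s)\<bar> \<le> 1 / sin (s / 2)"
proof -
  have "\<bar>2 * sin (s / 2) * (\<Sum>i\<le>j. sin ((real i + 1 / 2) * s))\<bar> \<le> 2"
    unfolding sin_half_times_sum_sin using cos_ge_minus_one cos_le_one by (simp add: abs_le_iff)
  then show ?thesis
    using assms by (simp add: abs_mult field_simps)
qed

definition weighted_variation :: "real \<Rightarrow> (nat \<Rightarrow> real) \<Rightarrow> nat \<Rightarrow> real" where
  "weighted_variation \<beta> a m =
     (\<Sum>k<m. (real k + 1) powr \<beta> * \<bar>a k / (real k + 1) powr \<beta> - a (Suc k) / (real k + 2) powr \<beta>\<bar>)"

lemma weighted_variation_nonneg: "0 \<le> weighted_variation \<beta> a m"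
  by (simp add: weighted_variation_def sum_nonneg)

lemma weighted_variation_eq:
  "weighted_variation \<beta> a m =
     (\<Sum>k<m. (real k + 1) powr \<beta>
        * \<bar>a k / (real k + 1) powr \<beta> - a (Suc k) / (real (Suc k) + 1) powr \<beta>\<bar>)"
  by (simp add: weighted_variation_def add.commute)

lemma abs_mean_kernel_le_sin:
  fixes a :: "nat \<Rightarrow> real"
  assumes "0 \<le> \<beta>" and a_nonneg: "0 \<le> a n" and variation: "weighted_variation \<beta> a n \<le> C * a n"
    and s: "0 < s" "s \<le> pi"
  shows "\<bar>mean_kernel a n s\<bar> \<le> (C + 1) * a n / (sin (s / 2))\<^sup>2"
proof -
  define w where "w k = (real k + 1) powr \<beta>" for k
  define \<sigma> where "\<sigma> i = sin ((real i + 1 / 2) * s)" for i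
  define b where "b k = a k / w k" for k
  define M where "M = 1 / sin (s / 2)"
  have w_pos: "0 < w k" for k by (simp add: w_def)
  then have w_nonzero: "w k \<noteq> 0" for k by (metis less_irrefl)
  have w_mono: "w k \<le> w (Suc k)" for k
    unfolding w_def using \<open>0 \<le> \<beta>\<close> by (intro powr_mono2) auto
  have sin_pos: "0 < sin (s / 2)" using s by (intro sin_gt_zero) auto
  have partial_sums: "\<bar>\<Sum>i\<le>k. w i * \<sigma> i\<bar> \<le> 2 * w k * M" for k
    using w_pos w_mono abs_sum_sin_le[OF sin_pos]
    by (intro abs_sum_monotone_weights_le) (auto simp: \<sigma>_def M_def less_imp_le)
  have "2 * sin (s / 2) * mean_kernel a n s = (\<Sum>k\<le>n. b k * (w k * \<sigma> k))"
    unfolding mean_kernel_def sum_distrib_left atLeast0AtMost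
    by (intro sum.cong)
      (auto simp: b_def \<sigma>_def sin_half_times_dirichlet_kernel[symmetric] w_nonzero)
  then have "\<bar>2 * sin (s / 2) * mean_kernel a n s\<bar>
      \<le> (\<Sum>k<n. \<bar>b k - b (Suc k)\<bar> * \<bar>\<Sum>i\<le>k. w i * \<sigma> i\<bar>) + \<bar>b n\<bar> * \<bar>\<Sum>i\<le>n. w i * \<sigma> i\<bar>"
    using abs_sum_by_parts_le[of b "\<lambda>k. w k * \<sigma> k" n] by simp
  also have "\<dots> \<le> (\<Sum>k<n. \<bar>b k - b (Suc k)\<bar> * (2 * w k * M)) + \<bar>b n\<bar> * (2 * w n * M)"
    by (intro add_mono sum_mono mult_left_mono partial_sums) auto
  also have "\<dots> = 2 * M * (weighted_variation \<beta> a n + a n)"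
    using w_pos[of n] a_nonneg
    by (simp add: weighted_variation_eq b_def w_def sum_distrib_left sum_distrib_right
        algebra_simps)
  also have "\<dots> \<le> 2 * M * ((C + 1) * a n)"
    using variation sin_pos by (intro mult_left_mono) (auto simp: M_def algebra_simps)
  finally show ?thesis
    using sin_pos by (simp add: M_def abs_mult power2_eq_square field_simps)
qed

lemma sin_ge_third:
  fixes x :: real
  assumes "0 \<le> x" "x \<le> 2"
  shows "x / 3 \<le> sin x"
proof -
  have "\<bar>sin x - x\<bar> \<le> x ^ 3 / 6"
    using Maclaurin_sin_bound[of x 3] assms by (simp add: sin_coeff_def numeral_eq_Suc)
  moreover have "x ^ 3 \<le> 4 * x"
  proof -
    have "x\<^sup>2 \<le> 2\<^sup>2" using assms by (intro power_mono) auto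
    then show ?thesis using assms by (simp add: power3_eq_cube power2_eq_square mult_right_mono)
  qed
  ultimately show ?thesis by linarith
qed

lemma abs_mean_kernel_le_inverse_square:
  fixes a :: "nat \<Rightarrow> real"
  assumes "0 \<le> \<beta>" and a_nonneg: "0 \<le> a n" and variation: "weighted_variation \<beta> a n \<le> C * a n"
    and s: "0 < s" "s \<le> pi"
  shows "\<bar>mean_kernel a n s\<bar> \<le> 36 * (C + 1) * a n / s\<^sup>2"
proof -
  have "s / 6 \<le> sin (s / 2)"
    using sin_ge_third[of "s / 2"] s pi_less_4 by simp
  then have "(s / 6)\<^sup>2 \<le> (sin (s / 2))\<^sup>2" and "0 < sin (s / 2)"
    using s by (auto intro!: power_mono)
  moreover have "0 \<le> (C + 1) * a n"
    using variation weighted_variation_nonneg[of \<beta> a n] a_nonneg by (simp add: algebra_simps)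
  ultimately have "(C + 1) * a n / (sin (s / 2))\<^sup>2 \<le> (C + 1) * a n / (s / 6)\<^sup>2"
    using s by (intro divide_left_mono) auto
  also have "\<dots> = 36 * (C + 1) * a n / s\<^sup>2"
    by (simp add: power2_eq_square field_simps)
  finally show ?thesis
    using abs_mean_kernel_le_sin[OF assms] by linarith
qed

lemma entry_le_last_entry:
  fixes a :: "nat \<Rightarrow> real"
  assumes "0 \<le> \<beta>" and a_nonneg: "0 \<le> a n" and variation: "weighted_variation \<beta> a n \<le> C * a n"
    and "k \<le> n"
  shows "a k \<le> (1 + C) * a n"
proof -
  define w where "w i = (real i + 1) powr \<beta>" for i
  define b where "b i = a i / w i" for i
  have w_pos: "0 < w i" for i by (simp add: w_def)
  then have w_nonzero: "w i \<noteq> 0" for i by (metis less_irrefl)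
  have w_mono: "w i \<le> w j" if "i \<le> j" for i j
    unfolding w_def using \<open>0 \<le> \<beta>\<close> that by (intro powr_mono2) auto
  have "b k - b n = (\<Sum>j=k..<n. b j - b (Suc j))"
    using sum_Suc_diff'[OF \<open>k \<le> n\<close>, of "\<lambda>j. - b j"] by simp
  then have "w k * \<bar>b k - b n\<bar> \<le> (\<Sum>j=k..<n. w k * \<bar>b j - b (Suc j)\<bar>)"
    using w_pos[of k] by (simp add: sum_distrib_left[symmetric] mult_left_mono)
  also have "\<dots> \<le> (\<Sum>j=k..<n. w j * \<bar>b j - b (Suc j)\<bar>)"
    using w_mono by (intro sum_mono mult_right_mono) auto
  also have "\<dots> \<le> (\<Sum>j<n. w j * \<bar>b j - b (Suc j)\<bar>)"
    using w_pos by (intro sum_mono2) (auto simp: less_imp_le)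
  also have "\<dots> = weighted_variation \<beta> a n"
    by (simp add: weighted_variation_eq b_def w_def)
  finally have "w k * \<bar>b k - b n\<bar> \<le> C * a n"
    using variation by linarith
  moreover have "w k * b n \<le> a n"
  proof -
    have "w k / w n \<le> 1"
      using w_pos[of n] w_mono[OF \<open>k \<le> n\<close>] by simp
    then have "a n * (w k / w n) \<le> a n"
      using a_nonneg by (rule mult_left_le)
    then show ?thesis by (simp add: b_def mult.commute)
  qed
  moreover have "a k \<le> w k * b n + w k * \<bar>b k - b n\<bar>"
  proof -
    have "a k = w k * b k" using w_nonzero by (simp add: b_def)
    also have "\<dots> \<le> w k * (b n + \<bar>b k - b n\<bar>)" using w_pos[of k] by (intro mult_left_mono) auto
    finally show ?thesis by (simp add: distrib_left)
  qed
  ultimately show ?thesis by (simp add: algebra_simps)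
qed

lemma last_entry_lower_bound:
  fixes a :: "nat \<Rightarrow> real"
  assumes "0 \<le> \<beta>" and "0 \<le> a n" and "weighted_variation \<beta> a n \<le> C * a n"
    and rowsum: "(\<Sum>k=0..n. a k) = 1"
  shows "1 \<le> (real n + 1) * ((1 + C) * a n)"
proof -
  have "(\<Sum>k=0..n. a k) \<le> (\<Sum>k=0..n. (1 + C) * a n)"
    using entry_le_last_entry[OF assms(1-3)] by (intro sum_mono) auto
  then show ?thesis using rowsum by (simp add: add.commute)
qed

section \<open>Error of the matrix means\<close>

lemma sup_norm_le:
  assumes "\<And>x. \<bar>g x\<bar> \<le> M"
  shows "sup_norm g \<le> M"
  unfolding sup_norm_def using assms by (intro cSUP_least) auto

lemma eventually_at_right_0_sequentially:
  assumes "eventually P (at_right 0)"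
  shows "eventually (\<lambda>n. P (pi / (real n + 1))) sequentially"
proof -
  have "filterlim (\<lambda>n. pi / (real n + 1)) (at_right 0) sequentially"
    by real_asymp
  with assms show ?thesis by (rule eventually_compose_filterlim)
qed

lemma uniform_bound_from_eventual_bound:
  fixes g h K :: "nat \<Rightarrow> real"
  assumes eventual: "eventually (\<lambda>n. g n \<le> c * h n) sequentially"
    and apriori: "\<And>n. g n \<le> K n * h n" and h_nonneg: "\<And>n. 0 \<le> h n"
  shows "\<exists>C>0. \<forall>n. g n \<le> C * h n"
proof -
  obtain N where N: "\<And>n. N \<le> n \<Longrightarrow> g n \<le> c * h n"
    using eventual by (auto simp: eventually_sequentially)
  define C where "C = 1 + \<bar>c\<bar> + (\<Sum>m<N. \<bar>K m\<bar>)"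
  have "g n \<le> C * h n" for n
  proof (cases "N \<le> n")
    case True
    have "c \<le> C" by (simp add: C_def sum_nonneg add_increasing2)
    then show ?thesis using N[OF True] h_nonneg[of n] by (meson mult_right_mono order_trans)
  next
    case False
    have "\<bar>K n\<bar> \<le> (\<Sum>m<N. \<bar>K m\<bar>)"
      using False by (intro member_le_sum) auto
    then have "K n \<le> C" by (simp add: C_def)
    then show ?thesis using apriori[of n] h_nonneg[of n] by (meson mult_right_mono order_trans)
  qed
  moreover have "0 < C" by (simp add: C_def add_pos_nonneg sum_nonneg)
  ultimately show ?thesis by blast
qed

locale matrix_mean_setting =
  fixes f :: "real \<Rightarrow> real" and A :: "nat \<Rightarrow> nat \<Rightarrow> real" and \<beta> C :: real
  assumes cont: "continuous_on UNIV f"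
    and periodic: "\<And>x. f (x + 2 * pi) = f x"
    and nonneg: "\<And>n k. 0 \<le> A n k"
    and rowsum: "\<And>n. (\<Sum>k=0..n. A n k) = 1"
    and beta: "0 \<le> \<beta>"
    and variation: "\<And>n. weighted_variation \<beta> (A n) n \<le> C * A n n"
    and C_nonneg: "0 \<le> C"
begin

lemma bounded: "bounded (range f)"
  by (rule continuous_periodic_bounded[OF cont, of "2 * pi", OF periodic]) simp

lemma continuous_on_error_integrand:
  "continuous_on UNIV (\<lambda>s. (f (x + s) + f (x - s) - 2 * f x) * mean_kernel (A n) n s)"
  by (intro continuous_intros continuous_on_compose_UNIV[OF cont])

lemma abs_integral_near_zero_le:
  fixes n :: nat
  defines "u \<equiv> pi / (real n + 1)"
  shows "\<bar>integral {0..u} (\<lambda>s. (f (x + s) + f (x - s) - 2 * f x) * mean_kernel (A n) n s)\<bar>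
    \<le> 2 * pi * modulus_of_continuity f u"
proof -
  let ?\<omega> = "modulus_of_continuity f"
  have u: "0 < u" by (simp add: u_def)
  have "norm (integral {0..u} (\<lambda>s. (f (x + s) + f (x - s) - 2 * f x) * mean_kernel (A n) n s))
      \<le> integral {0..u} (\<lambda>s. 2 * ?\<omega> u * (real n + 1))"
  proof (rule integral_norm_bound_integral[OF
        continuous_on_UNIV_integrable[OF continuous_on_error_integrand] integrable_const_ivl])
    fix s assume "s \<in> {0..u}"
    then show "norm ((f (x + s) + f (x - s) - 2 * f x) * mean_kernel (A n) n s)
        \<le> 2 * ?\<omega> u * (real n + 1)"
      unfolding real_norm_def abs_mult
      using abs_symmetric_difference_le[OF bounded, of s u x]
        abs_mean_kernel_le[where a = "A n", OF nonneg rowsum]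
        modulus_of_continuity_nonneg[OF bounded, of u] u
      by (intro mult_mono) auto
  qed
  also have "\<dots> = 2 * pi * ?\<omega> u"
    using u by (simp add: u_def field_simps)
  finally show ?thesis by simp
qed

lemma abs_integral_away_from_zero_le:
  assumes "0 < u"
  shows "\<bar>integral {u..pi} (\<lambda>s. (f (x + s) + f (x - s) - 2 * f x) * mean_kernel (A n) n s)\<bar>
    \<le> 72 * (C + 1) * A n n * integral {u..pi} (\<lambda>t. modulus_of_continuity f t / t\<^sup>2)"
proof -
  let ?\<omega> = "modulus_of_continuity f"
  have "norm (integral {u..pi} (\<lambda>s. (f (x + s) + f (x - s) - 2 * f x) * mean_kernel (A n) n s))
      \<le> integral {u..pi} (\<lambda>s. 72 * (C + 1) * A n n * (?\<omega> s / s\<^sup>2))"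
  proof (rule integral_norm_bound_integral[OF
        continuous_on_UNIV_integrable[OF continuous_on_error_integrand]
        integrable_on_mult_right[OF modulus_over_square_integrable[OF bounded \<open>0 < u\<close>]]])
    fix s assume "s \<in> {u..pi}"
    then have "\<bar>(f (x + s) + f (x - s) - 2 * f x) * mean_kernel (A n) n s\<bar>
        \<le> 2 * ?\<omega> s * (36 * (C + 1) * A n n / s\<^sup>2)"
      unfolding abs_mult
      using abs_symmetric_difference_le[OF bounded, of s s x] \<open>0 < u\<close>
        modulus_of_continuity_nonneg[OF bounded, of s]
        abs_mean_kernel_le_inverse_square[OF beta nonneg[of n n] variation, of s]
      by (intro mult_mono) auto
    then show "norm ((f (x + s) + f (x - s) - 2 * f x) * mean_kernel (A n) n s)
        \<le> 72 * (C + 1) * A n n * (?\<omega> s / s\<^sup>2)"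
      by (simp add: field_simps)
  qed
  then show ?thesis by (simp only: real_norm_def integral_mult_right)
qed

lemma sup_norm_matrix_mean_error_le:
  fixes n :: nat
  defines "u \<equiv> pi / (real n + 1)"
  shows "sup_norm (\<lambda>x. matrix_mean A f n x - f x) \<le> 2 * modulus_of_continuity f u
    + 72 * (C + 1) * A n n * integral {u..pi} (\<lambda>t. modulus_of_continuity f t / t\<^sup>2)"
proof (rule sup_norm_le)
  fix x
  let ?\<omega> = "modulus_of_continuity f"
  let ?G = "\<lambda>s. (f (x + s) + f (x - s) - 2 * f x) * mean_kernel (A n) n s"
  define I where "I = integral {u..pi} (\<lambda>t. ?\<omega> t / t\<^sup>2)"
  have u: "0 < u" "u \<le> pi" by (simp_all add: u_def field_simps)
  have "integral {0..pi} ?G = integral {0..u} ?G + integral {u..pi} ?G"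
    using u continuous_on_UNIV_integrable[OF continuous_on_error_integrand]
    by (intro Henstock_Kurzweil_Integration.integral_combine[symmetric]) auto
  then have "\<bar>matrix_mean A f n x - f x\<bar> = \<bar>integral {0..u} ?G + integral {u..pi} ?G\<bar> / pi"
    using matrix_mean_minus_eq[where f = f and A = A and n = n, OF cont periodic rowsum]
    by (simp add: abs_mult)
  also have "\<dots> \<le> (2 * pi * ?\<omega> u + 72 * (C + 1) * A n n * I) / pi"
    using abs_integral_near_zero_le[of n x] abs_integral_away_from_zero_le[OF u(1), of x n]
    by (intro divide_right_mono) (auto simp: u_def I_def)
  also have "\<dots> \<le> 2 * ?\<omega> u + 72 * (C + 1) * A n n * I"
  proof -
    have "0 \<le> 72 * (C + 1) * A n n * I"
      unfolding I_def
      using integral_modulus_over_square_nonneg[OF bounded u(1)] C_nonneg nonneg[of n n]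
      by simp
    then have "72 * (C + 1) * A n n * I / pi \<le> 72 * (C + 1) * A n n * I"
      using pi_ge_two by (simp add: divide_le_eq mult_le_cancel_left1)
    then show ?thesis by (simp add: add_divide_distrib)
  qed
  finally show "\<bar>matrix_mean A f n x - f x\<bar> \<le> 2 * ?\<omega> u + 72 * (C + 1) * A n n * I" .
qed

lemma diagonal_le_one: "A n n \<le> 1"
  using member_le_sum[of n "{0..n}" "A n"] nonneg rowsum[of n] by simp

lemma sup_norm_matrix_mean_error_le_modulus:
  "sup_norm (\<lambda>x. matrix_mean A f n x - f x)
    \<le> (2 + 72 * (C + 1) * (real n + 1) ^ 3) * modulus_of_continuity f (pi / (real n + 1))"
proof -
  let ?u = "pi / (real n + 1)"
  have "A n n * integral {?u..pi} (\<lambda>t. modulus_of_continuity f t / t\<^sup>2)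
      \<le> 1 * ((real n + 1) ^ 3 * modulus_of_continuity f ?u)"
    using integral_modulus_over_square_le[OF bounded, of n] diagonal_le_one[of n]
      integral_modulus_over_square_nonneg[OF bounded, of ?u pi]
    by (intro mult_mono) auto
  then have "72 * (C + 1) * A n n * integral {?u..pi} (\<lambda>t. modulus_of_continuity f t / t\<^sup>2)
      \<le> 72 * (C + 1) * ((real n + 1) ^ 3 * modulus_of_continuity f ?u)"
    using C_nonneg by (simp add: mult.assoc mult_left_mono)
  then show ?thesis
    using sup_norm_matrix_mean_error_le[of n] by (simp add: algebra_simps)
qed

lemma sup_norm_matrix_mean_error_le_integral:
  assumes "1 \<le> n"
  shows "sup_norm (\<lambda>x. matrix_mean A f n x - f x) \<le> (4 * pi + 72) * (C + 1) * A n n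
    * integral {pi / (real n + 1)..pi} (\<lambda>t. modulus_of_continuity f t / t\<^sup>2)"
proof -
  let ?u = "pi / (real n + 1)" and ?\<omega> = "modulus_of_continuity f"
  define I where "I = integral {?u..pi} (\<lambda>t. ?\<omega> t / t\<^sup>2)"
  have u: "0 < ?u" "?u \<le> pi / 2"
    using assms by (simp_all add: field_simps)
  have lower: "1 / (real n + 1) \<le> (1 + C) * A n n"
    using last_entry_lower_bound[OF beta nonneg[of n n] variation rowsum]
    by (simp add: divide_le_eq mult.commute)
  then have "?u \<le> pi * ((1 + C) * A n n)"
    using mult_left_mono[OF lower pi_ge_zero] by simp
  moreover have "0 \<le> I"
    unfolding I_def using integral_modulus_over_square_nonneg[OF bounded u(1)] .
  ultimately have "?\<omega> ?u \<le> 2 * (pi * ((1 + C) * A n n)) * I"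
    using modulus_le_integral_modulus_over_square[OF bounded u] unfolding I_def[symmetric]
    by (meson mult_left_mono mult_right_mono order_trans zero_le_numeral)
  then show ?thesis
    using sup_norm_matrix_mean_error_le[of n] by (simp add: I_def algebra_simps)
qed

lemma sup_norm_matrix_mean_error_big_O:
  assumes H_nonneg: "\<And>u. 0 \<le> u \<Longrightarrow> 0 \<le> H u" and "0 < K"
    and H_bound: "\<forall>\<^sub>F n in sequentially. integral {pi / (real n + 1)..pi}
      (\<lambda>t. modulus_of_continuity f t / t\<^sup>2) \<le> K * H (pi / (real n + 1))"
  shows "\<exists>C>0. \<forall>n. sup_norm (\<lambda>x. matrix_mean A f n x - f x)
    \<le> C * (modulus_of_continuity f (pi / (real n + 1)) + A n n * H (pi / (real n + 1)))"
proof (rule uniform_bound_from_eventual_bound)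
  let ?u = "\<lambda>n. pi / (real n + 1)" and ?\<omega> = "modulus_of_continuity f"
  have \<omega>_nonneg: "0 \<le> ?\<omega> (?u n)" for n
    using modulus_of_continuity_nonneg[OF bounded] by simp
  have AH_nonneg: "0 \<le> A n n * H (?u n)" for n
    using nonneg[of n n] H_nonneg[of "?u n"] by simp
  show "0 \<le> ?\<omega> (?u n) + A n n * H (?u n)" for n
    using \<omega>_nonneg[of n] AH_nonneg[of n] by simp
  show "sup_norm (\<lambda>x. matrix_mean A f n x - f x)
      \<le> (2 + 72 * (C + 1) * (real n + 1) ^ 3) * (?\<omega> (?u n) + A n n * H (?u n))" for n
  proof -
    have "(2 + 72 * (C + 1) * (real n + 1) ^ 3) * ?\<omega> (?u n)
        \<le> (2 + 72 * (C + 1) * (real n + 1) ^ 3) * (?\<omega> (?u n) + A n n * H (?u n))"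
      using AH_nonneg[of n] C_nonneg by (intro mult_left_mono) auto
    then show ?thesis using sup_norm_matrix_mean_error_le_modulus[of n] by linarith
  qed
  show "\<forall>\<^sub>F n in sequentially. sup_norm (\<lambda>x. matrix_mean A f n x - f x)
      \<le> (2 + 72 * (C + 1) * K) * (?\<omega> (?u n) + A n n * H (?u n))"
    using H_bound
  proof eventually_elim
    case (elim n)
    have "0 \<le> 72 * (C + 1) * A n n"
      using C_nonneg nonneg[of n n] by simp
    with elim have "72 * (C + 1) * A n n * integral {?u n..pi} (\<lambda>t. ?\<omega> t / t\<^sup>2)
        \<le> 72 * (C + 1) * A n n * (K * H (?u n))"
      by (rule mult_left_mono)
    then have "sup_norm (\<lambda>x. matrix_mean A f n x - f x)
        \<le> 2 * ?\<omega> (?u n) + 72 * (C + 1) * K * (A n n * H (?u n))"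
      using sup_norm_matrix_mean_error_le[of n] by (simp add: ac_simps)
    also have "\<dots> \<le> (2 + 72 * (C + 1) * K) * (?\<omega> (?u n) + A n n * H (?u n))"
    proof -
      have "0 \<le> 2 * (A n n * H (?u n)) + 72 * (C + 1) * K * ?\<omega> (?u n)"
        using AH_nonneg[of n] \<omega>_nonneg[of n] C_nonneg \<open>0 < K\<close> by simp
      then show ?thesis by (simp add: algebra_simps)
    qed
    finally show ?case .
  qed
qed

lemma sup_norm_matrix_mean_error_big_O_diagonal:
  assumes "0 < K"
    and H_bound: "\<forall>\<^sub>F n in sequentially. integral {pi / (real n + 1)..pi}
      (\<lambda>t. modulus_of_continuity f t / t\<^sup>2) \<le> K * H (pi / (real n + 1))"
  shows "\<exists>C>0. \<forall>\<^sub>F n in sequentially. sup_norm (\<lambda>x. matrix_mean A f n x - f x)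
    \<le> C * (A n n * H (pi / (real n + 1)))"
proof -
  let ?u = "\<lambda>n. pi / (real n + 1)"
  have "\<forall>\<^sub>F n in sequentially. sup_norm (\<lambda>x. matrix_mean A f n x - f x)
      \<le> (4 * pi + 72) * (C + 1) * K * (A n n * H (?u n))"
    using H_bound eventually_ge_at_top[of 1]
  proof eventually_elim
    case (elim n)
    have "0 \<le> (4 * pi + 72) * (C + 1) * A n n"
      using C_nonneg nonneg[of n n] by simp
    with elim(1) have "(4 * pi + 72) * (C + 1) * A n n
        * integral {?u n..pi} (\<lambda>t. modulus_of_continuity f t / t\<^sup>2)
        \<le> (4 * pi + 72) * (C + 1) * A n n * (K * H (?u n))"
      by (rule mult_left_mono)
    then show ?case
      using sup_norm_matrix_mean_error_le_integral[OF elim(2)] by (simp add: ac_simps)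
  qed
  moreover have "0 < (4 * pi + 72) * (C + 1) * K"
    using C_nonneg \<open>0 < K\<close> by (simp add: add_pos_nonneg)
  ultimately show ?thesis by blast
qed

end

theorem theorem3p2:
  fixes f :: "real \<Rightarrow> real" and A :: "nat \<Rightarrow> nat \<Rightarrow> real"
    and \<beta> :: real and H :: "real \<Rightarrow> real"
  assumes cont: "continuous_on UNIV f"
    and periodic: "\<And>x. f (x + 2 * pi) = f x"
    and lower: "\<And>n k. n < k \<Longrightarrow> A n k = 0"
    and nonneg: "\<And>n k. 0 \<le> A n k"
    and rowsum: "\<And>n. (\<Sum>k=0..n. A n k) = 1"
    and beta: "0 \<le> \<beta>"
    and cond: "\<exists>C>0. \<forall>n m. m \<le> n \<longrightarrow>
        (\<Sum>k<m. (real k + 1) powr \<beta> *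
           \<bar>A n k / (real k + 1) powr \<beta> - A n (Suc k) / (real k + 2) powr \<beta>\<bar>)
        \<le> C * A n m"
    and H_nonneg: "\<And>u. 0 \<le> u \<Longrightarrow> 0 \<le> H u"
    and H_bound: "\<exists>C>0. \<forall>\<^sub>F u in at_right 0.
        integral {u..pi} (\<lambda>t. modulus_of_continuity f t / t\<^sup>2) \<le> C * H u"
  shows "(\<exists>C>0. \<forall>n. sup_norm (\<lambda>x. matrix_mean A f n x - f x)
            \<le> C * (modulus_of_continuity f (pi / (real n + 1))
                   + A n n * H (pi / (real n + 1))))
       \<and> ((\<exists>C>0. \<forall>\<^sub>F t in at_right 0.
              H integrable_on {0..t} \<and> integral {0..t} H \<le> C * (t * H t))
          \<longrightarrow> (\<exists>C>0. \<forall>\<^sub>F n in sequentially.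
                 sup_norm (\<lambda>x. matrix_mean A f n x - f x)
                   \<le> C * (A n n * H (pi / (real n + 1)))))"
proof -
  obtain C where "0 < C" and "\<forall>n m. m \<le> n \<longrightarrow> (\<Sum>k<m. (real k + 1) powr \<beta> *
      \<bar>A n k / (real k + 1) powr \<beta> - A n (Suc k) / (real k + 2) powr \<beta>\<bar>) \<le> C * A n m"
    using cond by blast
  then have variation: "weighted_variation \<beta> (A n) n \<le> C * A n n" for n
    by (simp add: weighted_variation_def)
  interpret matrix_mean_setting f A \<beta> C
  proof
    show "0 \<le> C" using \<open>0 < C\<close> by simp
  qed (fact cont periodic nonneg rowsum beta variation)+
  obtain K where "0 < K"
    and K: "\<forall>\<^sub>F u in at_right 0.
      integral {u..pi} (\<lambda>t. modulus_of_continuity f t / t\<^sup>2) \<le> K * H u"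
    using H_bound by blast
  have K_sequentially: "\<forall>\<^sub>F n in sequentially. integral {pi / (real n + 1)..pi}
      (\<lambda>t. modulus_of_continuity f t / t\<^sup>2) \<le> K * H (pi / (real n + 1))"
    using eventually_at_right_0_sequentially[OF K] by simp
  show ?thesis
    using sup_norm_matrix_mean_error_big_O[OF H_nonneg \<open>0 < K\<close> K_sequentially]
      sup_norm_matrix_mean_error_big_O_diagonal[OF \<open>0 < K\<close> K_sequentially] by simp
qed

end
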